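(* Let $n\ge3$ be an integer, $a\ge1$ real, and $x_0\in(0,\pi)$ with $S_{n,a}(x_0)=S_{n-2,a}(x_0)$. Then $a=1$ and $\phi_n(x_0)=0$.
   Context: For a real number $a$ and integers $0\le m$, $\binom{m+a}{m}=\frac{(a+1)(a+2)\cdots(a+m)}{m!}$ (equal to $1$ when $m=0$). For an integer $n\ge1$, $S_{n,a}(x)=\sum_{j=1}^n\binom{n+a-j}{n-j}\sin(jx)$, and $\phi_n(x)=2\sum_{j=1}^{n-1}\sin(jx)+\sin(nx)$. *)

theory Defs
  imports Complex_Main
begin

text \<open>binom m a = ((a+1)(a+2)...(a+m))/m!, i.e. the generalized binomial coefficient (m+a choose m).\<close>
definition binom_gen :: "nat \<Rightarrow> real \<Rightarrow> real" where
  "binom_gen m a = (\<Prod>i=1..m. (a + real i)) / fact m"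

definition S :: "nat \<Rightarrow> real \<Rightarrow> real \<Rightarrow> real" where
  "S n a x = (\<Sum>j=1..n. binom_gen (n - j) a * sin (real j * x))"

definition phi :: "nat \<Rightarrow> real \<Rightarrow> real" where
  "phi n x = 2 * (\<Sum>j=1..n-1. sin (real j * x)) + sin (real n * x)"

end

theory Submission
  imports Defs
begin

text \<open>Write \<open>e i = binom_gen i (a - 2)\<close>. Pascal's rule and the hockey-stick identity
  turn the coefficients of \<open>S n a - S (n - 2) a\<close> into a convolution of \<open>e\<close> with the weights
  \<open>1, 2, 2, \<dots>\<close> of \<open>phi\<close>, so that \<open>S n a x - S (n - 2) a x = (\<Sum>i\<le>n. e i * phi (n - i) x)\<close>.
  The Fejer-type identity \<open>sin (x/2) * phi m x = cos (x/2) * (1 - cos (m x))\<close> makes every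
  \<open>phi m\<close> nonnegative on \<open>(0, pi)\<close>. For \<open>a \<ge> 1\<close> all \<open>e i\<close> are nonnegative, and for \<open>a > 1\<close>
  the term \<open>e (n - 1) * phi 1 x = e (n - 1) * sin x\<close> is positive, so equality forces \<open>a = 1\<close>;
  then \<open>e i = 0\<close> for \<open>i > 0\<close> and the difference is \<open>phi n x\<close> alone.\<close>

lemma binom_gen_0 [simp]: "binom_gen 0 c = 1"
  by (simp add: binom_gen_def)

lemma binom_gen_Suc: "binom_gen (Suc m) c = binom_gen m c * (c + real (Suc m)) / real (Suc m)"
  by (simp add: binom_gen_def field_simps)

lemma binom_gen_Suc_pred: "binom_gen (Suc m) (c - 1) = binom_gen m c * c / real (Suc m)"
proof -
  have "(\<Prod>i=1..Suc m. (c - 1 + real i)) = c * (\<Prod>i=1..m. (c + real i))"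
    by (induction m) (simp_all add: algebra_simps)
  then show ?thesis
    unfolding binom_gen_def by (simp add: field_simps del: prod.cl_ivl_Suc)
qed

lemma binom_gen_pascal: "binom_gen (Suc m) c = binom_gen (Suc m) (c - 1) + binom_gen m c"
  by (simp only: binom_gen_Suc_pred binom_gen_Suc[where c = c]) (simp add: field_simps)

lemma sum_binom_gen_pred: "(\<Sum>i=0..k. binom_gen i (c - 1)) = binom_gen k c"
proof (induction k)
  case (Suc k)
  then show ?case
    using binom_gen_pascal[where m = k and c = c] by simp
qed simp

lemma binom_gen_nonneg: "c \<ge> -1 \<Longrightarrow> binom_gen k c \<ge> 0"
  unfolding binom_gen_def by (intro divide_nonneg_pos prod_nonneg) auto

lemma binom_gen_pos: "c > -1 \<Longrightarrow> binom_gen k c > 0"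
  unfolding binom_gen_def by (intro divide_pos_pos prod_pos) auto

lemma binom_gen_minus_one: "k > 0 \<Longrightarrow> binom_gen k (-1) = 0"
  unfolding binom_gen_def by (subst prod_zero) (auto intro: bexI[of _ 1])

definition phi_weight :: "nat \<Rightarrow> real" where
  "phi_weight l = (if l = 0 then 1 else 2)"

lemma phi_eq_weighted_sum: "phi m x = (\<Sum>j=1..m. phi_weight (m - j) * sin (real j * x))"
proof (cases m)
  case (Suc q)
  have "(\<Sum>j=1..q. phi_weight (Suc q - j) * sin (real j * x)) = (\<Sum>j=1..q. 2 * sin (real j * x))"
    by (rule sum.cong) (auto simp: phi_weight_def)
  then show ?thesis
    unfolding phi_def Suc by (simp add: phi_weight_def sum_distrib_left)
qed (simp add: phi_def)

lemma binom_gen_diff_eq_convolution: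
  "binom_gen k c - (if 2 \<le> k then binom_gen (k - 2) c else 0)
     = (\<Sum>i=0..k. binom_gen i (c - 2) * phi_weight (k - i))"
proof (cases k)
  case (Suc m)
  have "binom_gen k c - (if 2 \<le> k then binom_gen (k - 2) c else 0)
      = binom_gen (Suc m) (c - 1) + binom_gen m (c - 1)"
    using binom_gen_pascal[where m = m and c = c] binom_gen_pascal[where m = "m - 1" and c = c] Suc
    by (cases m) auto
  also have "\<dots> = 2 * binom_gen m (c - 1) + binom_gen (Suc m) (c - 2)"
    using binom_gen_pascal[where m = m and c = "c - 1"] by simp
  also have "\<dots> = (\<Sum>i=0..m. binom_gen i (c - 2) * 2) + binom_gen (Suc m) (c - 2)"
    using sum_binom_gen_pred[where k = m and c = "c - 1"] by (simp add: sum_distrib_right[symmetric])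
  also have "\<dots> = (\<Sum>i=0..k. binom_gen i (c - 2) * phi_weight (k - i))"
    using Suc by (simp add: phi_weight_def sum.atLeast0_atMost_Suc del: sum.cl_ivl_Suc)
  finally show ?thesis .
qed (simp add: phi_weight_def)

lemma sum_triangle_swap:
  fixes f :: "nat \<Rightarrow> nat \<Rightarrow> 'a::comm_monoid_add"
  shows "(\<Sum>j=1..n. \<Sum>i=0..n-j. f i j) = (\<Sum>i=0..n. \<Sum>j=1..n-i. f i j)"
proof -
  have "(\<Sum>j=1..n. \<Sum>i=0..n-j. f i j) = (\<Sum>j\<in>{1..n}. \<Sum>i\<in>{i. i \<in> {0..n} \<and> i + j \<le> n}. f i j)"
    by (intro sum.cong arg_cong2[where f = sum]) auto
  also have "\<dots> = (\<Sum>i\<in>{0..n}. \<Sum>j\<in>{j. j \<in> {1..n} \<and> i + j \<le> n}. f i j)"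
    by (rule sum.swap_restrict) auto
  also have "\<dots> = (\<Sum>i=0..n. \<Sum>j=1..n-i. f i j)"
    by (intro sum.cong arg_cong2[where f = sum]) auto
  finally show ?thesis .
qed

lemma S_pred2_eq:
  "S (n - 2) a x = (\<Sum>j=1..n. (if 2 \<le> n - j then binom_gen (n - j - 2) a else 0) * sin (real j * x))"
proof -
  have "(\<Sum>j=1..n. (if 2 \<le> n - j then binom_gen (n - j - 2) a else 0) * sin (real j * x))
      = (\<Sum>j=1..n-2. binom_gen (n - 2 - j) a * sin (real j * x))"
    by (rule sum.mono_neutral_cong_right) auto
  then show ?thesis
    unfolding S_def by simp
qed

lemma S_diff_eq_convolution:
  "S n a x - S (n - 2) a x = (\<Sum>i=0..n. binom_gen i (a - 2) * phi (n - i) x)"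
proof -
  have "S n a x - S (n - 2) a x
      = (\<Sum>j=1..n. (binom_gen (n - j) a - (if 2 \<le> n - j then binom_gen (n - j - 2) a else 0))
                     * sin (real j * x))"
    unfolding S_pred2_eq by (simp add: S_def left_diff_distrib sum_subtractf)
  also have "\<dots> = (\<Sum>j=1..n. \<Sum>i=0..n-j. binom_gen i (a - 2) * (phi_weight (n - j - i) * sin (real j * x)))"
    unfolding binom_gen_diff_eq_convolution by (simp add: sum_distrib_right mult.assoc)
  also have "\<dots> = (\<Sum>i=0..n. binom_gen i (a - 2) * phi (n - i) x)"
    unfolding sum_triangle_swap phi_eq_weighted_sum
    by (simp add: sum_distrib_left diff_commute[of n _ "_::nat"] add.commute)
  finally show ?thesis .
qed

lemma sin_half_mult_sum_sin:
  "2 * sin (x / 2) * (\<Sum>j=1..m. sin (real j * x)) = cos (x / 2) - cos ((2 * real m + 1) * x / 2)"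
proof (induction m)
  case (Suc m)
  have e1: "x / 2 - real (Suc m) * x = - ((2 * real m + 1) * x / 2)"
    and e2: "x / 2 + real (Suc m) * x = (2 * real (Suc m) + 1) * x / 2"
    by (simp_all add: field_simps)
  have "2 * sin (x / 2) * sin (real (Suc m) * x)
      = cos ((2 * real m + 1) * x / 2) - cos ((2 * real (Suc m) + 1) * x / 2)"
    unfolding mult.assoc sin_times_sin e1 e2 cos_minus by simp
  then show ?case
    using Suc by (simp add: algebra_simps)
qed simp

lemma sin_half_mult_phi:
  assumes "m \<ge> 1"
  shows "sin (x / 2) * phi m x = cos (x / 2) * (1 - cos (real m * x))"
proof -
  have "phi m x = (\<Sum>j=1..m. sin (real j * x)) + (\<Sum>j=1..m-1. sin (real j * x))"
    using assms by (cases m) (simp_all add: phi_def)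
  then have "2 * sin (x / 2) * phi m x
      = 2 * cos (x / 2) - cos ((2 * real m + 1) * x / 2) - cos ((2 * real (m - 1) + 1) * x / 2)"
    by (simp only: distrib_left sin_half_mult_sum_sin)
  also have "\<dots> = 2 * cos (x / 2) - cos (real m * x + x / 2) - cos (real m * x - x / 2)"
    using assms by (simp add: of_nat_diff algebra_simps add_divide_distrib diff_divide_distrib)
  also have "\<dots> = 2 * (cos (x / 2) * (1 - cos (real m * x)))"
    by (simp add: cos_add cos_diff algebra_simps)
  finally show ?thesis
    by simp
qed

lemma phi_nonneg:
  assumes "0 < x" "x < pi"
  shows "phi m x \<ge> 0"
proof (cases "m = 0")
  case False
  have "sin (x / 2) > 0" "cos (x / 2) > 0"
    using assms by (auto intro: sin_gt_zero cos_gt_zero)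
  moreover have "sin (x / 2) * phi m x \<ge> 0"
    using False \<open>cos (x / 2) > 0\<close> by (simp add: sin_half_mult_phi)
  ultimately show ?thesis
    by (simp add: zero_le_mult_iff)
qed (simp add: phi_def)

lemma S_diff_ge_sin:
  assumes "n \<ge> 1" "a \<ge> 1" "0 < x" "x < pi"
  shows "S n a x - S (n - 2) a x \<ge> binom_gen (n - 1) (a - 2) * sin x"
proof -
  have "binom_gen (n - 1) (a - 2) * phi (n - (n - 1)) x \<le> (\<Sum>i=0..n. binom_gen i (a - 2) * phi (n - i) x)"
    using assms by (intro member_le_sum mult_nonneg_nonneg binom_gen_nonneg phi_nonneg) auto
  then show ?thesis
    using assms(1) by (simp add: S_diff_eq_convolution phi_def)
qed

lemma S_diff_at_one: "S n 1 x - S (n - 2) 1 x = phi n x"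
proof -
  have "(\<Sum>i=0..n. binom_gen i (-1) * phi (n - i) x) = phi n x"
    by (simp add: sum.atLeast_Suc_atMost binom_gen_minus_one)
  then show ?thesis
    by (simp add: S_diff_eq_convolution)
qed

theorem mainTheorem5:
  fixes n :: nat and a x0 :: real
  assumes "n \<ge> 3" and "a \<ge> 1" and "0 < x0" and "x0 < pi"
    and "S n a x0 = S (n - 2) a x0"
  shows "a = 1 \<and> phi n x0 = 0"
proof -
  have "a = 1"
  proof (rule ccontr)
    assume "a \<noteq> 1"
    then have "binom_gen (n - 1) (a - 2) * sin x0 > 0"
      using assms(2-4) by (intro mult_pos_pos binom_gen_pos sin_gt_zero) auto
    then show False
      using S_diff_ge_sin[of n a x0] assms by simp
  qed
  then show ?thesis
    using S_diff_at_one[of n x0] assms(5) by simp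
qed

end
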